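(* Let $d\in\mathbb{N}$ and let $p:\mathbb{Z}^d\to[0,1)$ satisfy $\sum_{x}p(x)=1$, $p(x)=0$ for $|x|>M$ for some $M<\infty$, and the strong aperiodicity property: for every $u\in\mathbb{Z}^d$ the smallest additive subgroup of $\mathbb{Z}^d$ containing $\{u+x:p(x)>0\}$ is $\mathbb{Z}^d$. Write $p(x,y)=p(y-x)$ and let $m_p=\sum_{x\in\mathbb{Z}^d}x\,p(x)\in\mathbb{R}^d$. Let $\{\xi_t(x)\}_{t\in\mathbb{Z},x\in\mathbb{Z}^d}$ be i.i.d. real random variables with mean $0$ and finite variance. For each $n$ let $h^n_t=\{h^n_t(x)\}_{x\in\mathbb{Z}^d}$, $t\in\mathbb{Z}_+$, be a harness process, i.e. $h^n_{t+1}(x)=\sum_{y}p(x,y)h^n_t(y)+\xi_{t+1}(x)$ with $\{\xi_{s}\}_{s\ge 1}$ independent of $h^n_0$. Let $u_0:\mathbb{R}^d\to\mathbb{R}$ be continuous and define $u(t,x)=u_0(x+t m_p)$. Assume that for all $\varepsilon>0$ and $R<\infty$, \[\lim_{n\to\infty}\mathbf{P}\Bigl\{\sup_{x\in\mathbb{R}^d:|x|\le R}\bigl|n^{-1}h^n_0(\lfloor nx\rfloor)-u_0(x)\bigr|\ge\varepsilon\Bigr\}=0.\] Then for all $\varepsilon>0$ and $(t,x)\in\mathbb{R}_+\times\mathbb{R}^d$, \[\lim_{n\to\infty}\mathbf{P}\bigl\{\bigl|n^{-1}h^n_{\lfloor nt\rfloor}(\lfloor nx\rfloor)-u(t,x)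\bigr|\ge\varepsilon\bigr\}=0.\]
   Context: $\lfloor nx\rfloor$ for $x\in\mathbb{R}^d$ denotes the componentwise integer part. $\mathbf{P}$ denotes the probability measure of the processes. *)

theory Defs
  imports "HOL-Probability.Probability"
begin

definition of_int_vec :: "int ^ 'd \<Rightarrow> real ^ 'd" where
  "of_int_vec x = (\<chi> i. real_of_int (x $ i))"

definition floor_vec :: "nat \<Rightarrow> real ^ 'd \<Rightarrow> int ^ 'd" where
  "floor_vec n x = (\<chi> i. \<lfloor>real n * x $ i\<rfloor>)"

definition add_subgroup_gen :: "'a::ab_group_add set \<Rightarrow> 'a set" where
  "add_subgroup_gen S = \<Inter>{G. S \<subseteq> G \<and> 0 \<in> G \<and> (\<forall>a\<in>G. \<forall>b\<in>G. a - b \<in> G)}"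

definition mean_drift :: "(int ^ 'd \<Rightarrow> real) \<Rightarrow> real ^ 'd" where
  "mean_drift p = (\<Sum>x\<in>{x. p x \<noteq> 0}. p x *\<^sub>R of_int_vec x)"

definition gen_sigma :: "'w measure \<Rightarrow> ('i \<Rightarrow> 'w \<Rightarrow> real) \<Rightarrow> 'i set \<Rightarrow> 'w set set" where
  "gen_sigma M X I = sigma_sets (space M) (\<Union>i\<in>I. {X i -` B \<inter> space M | B. B \<in> sets borel})"

end

theory Submission
  imports Defs
begin

text \<open>
  Write \<open>P f x = \<Sum>\<^sub>w p w * f (x + w)\<close> for the averaging operator of the harness, so that
  \<open>h\<^sub>k = P\<^sup>k h\<^sub>0 + D\<^sub>k\<close> where the noise part \<open>D\<^sub>k\<close> is a linear combination of the \<open>\<xi>\<^sub>s(y)\<close>, \<open>s \<le> k\<close>.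
  The \<open>\<xi>\<close> are orthogonal in \<open>L\<^sup>2\<close> and \<open>(P f)\<^sup>2 \<le> P (f\<^sup>2)\<close>, hence \<open>E D\<^sub>k(x)\<^sup>2 \<le> k \<sigma>\<^sup>2\<close>; at times
  \<open>k \<approx> n t\<close> Chebyshev's inequality makes \<open>D\<^sub>k / n\<close> small in probability.

  The deterministic part is handled by positivity of \<open>P\<close>: near the region reachable in \<open>k\<close>
  steps, \<open>|h\<^sub>0(y)/n - u\<^sub>0(c)|\<close> is dominated by the initial error plus \<open>\<eta> + K |y - n c|\<^sup>2\<close>
  (uniform continuity and boundedness of \<open>u\<^sub>0\<close> on a ball), and \<open>P\<^sup>k\<close> maps \<open>|y - a|\<^sup>2\<close> to
  \<open>|x + k m\<^sub>p - a|\<^sup>2 + k V\<close>. With \<open>c = x + t m\<^sub>p\<close> and \<open>K = O(1/n\<^sup>2)\<close> the quadratic term is \<open>O(1/n)\<close>.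
\<close>

section \<open>The averaging operator\<close>

definition trans_op :: "('a::ab_group_add \<Rightarrow> real) \<Rightarrow> 'a set \<Rightarrow> ('a \<Rightarrow> real) \<Rightarrow> 'a \<Rightarrow> real" where
  "trans_op p S f x = (\<Sum>w\<in>S. p w * f (x + w))"

definition step_mean :: "(int ^ 'd \<Rightarrow> real) \<Rightarrow> (int ^ 'd) set \<Rightarrow> real ^ 'd" where
  "step_mean p S = (\<Sum>w\<in>S. p w *\<^sub>R of_int_vec w)"

definition step_var :: "(int ^ 'd \<Rightarrow> real) \<Rightarrow> (int ^ 'd) set \<Rightarrow> real" where
  "step_var p S = (\<Sum>w\<in>S. p w * (norm (of_int_vec w - step_mean p S))\<^sup>2)"

lemma of_int_vec_add: "of_int_vec (a + b) = of_int_vec a + of_int_vec b"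
  by (simp add: of_int_vec_def vec_eq_iff)

lemma trans_op_add: "trans_op p S (\<lambda>y. f y + g y) = (\<lambda>x. trans_op p S f x + trans_op p S g x)"
  by (auto simp: trans_op_def sum.distrib distrib_left)

lemma trans_op_scale: "trans_op p S (\<lambda>y. c * f y) = (\<lambda>x. c * trans_op p S f x)"
  by (auto simp: trans_op_def sum_distrib_left mult_ac)

lemma trans_op_const: "sum p S = 1 \<Longrightarrow> trans_op p S (\<lambda>y. c) = (\<lambda>x. c)"
  by (auto simp: trans_op_def simp flip: sum_distrib_right)

lemma trans_iter_add:
  "(trans_op p S ^^ k) (\<lambda>y. f y + g y) = (\<lambda>x. (trans_op p S ^^ k) f x + (trans_op p S ^^ k) g x)"
  by (induction k) (simp_all add: trans_op_add)

lemma trans_iter_scale: "(trans_op p S ^^ k) (\<lambda>y. c * f y) = (\<lambda>x. c * (trans_op p S ^^ k) f x)"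
  by (induction k) (simp_all add: trans_op_scale)

lemma trans_iter_const: "sum p S = 1 \<Longrightarrow> (trans_op p S ^^ k) (\<lambda>y. c) = (\<lambda>x. c)"
  by (induction k) (simp_all add: trans_op_const)

lemma trans_iter_Suc_apply:
  "(trans_op p S ^^ Suc k) f x = (\<Sum>w\<in>S. p w * (trans_op p S ^^ k) f (x + w))"
  by (simp add: trans_op_def)

lemma sum_kernel_eq_trans_op:
  "(\<Sum>y\<in>{y. p (y - x) \<noteq> 0}. p (y - x) * f y) = trans_op p {w. p w \<noteq> 0} f x"
  unfolding trans_op_def
  by (rule sum.reindex_bij_witness[where i="\<lambda>w. x + w" and j="\<lambda>y. y - x"]) auto

lemma trans_iter_mono_local:
  fixes f g :: "int ^ 'd \<Rightarrow> real"
  assumes pos: "\<And>w. w \<in> S \<Longrightarrow> 0 \<le> p w"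
    and bd: "\<And>w. w \<in> S \<Longrightarrow> norm (of_int_vec w) \<le> Mb"
    and le: "\<And>y. norm (of_int_vec y - of_int_vec x) \<le> real k * Mb \<Longrightarrow> f y \<le> g y"
  shows "(trans_op p S ^^ k) f x \<le> (trans_op p S ^^ k) g x"
  using le
proof (induction k arbitrary: x)
  case 0
  then show ?case by simp
next
  case (Suc k)
  have "(trans_op p S ^^ k) f (x + w) \<le> (trans_op p S ^^ k) g (x + w)" if w: "w \<in> S" for w
  proof (rule Suc.IH)
    fix y assume "norm (of_int_vec y - of_int_vec (x + w)) \<le> real k * Mb"
    moreover have "norm (of_int_vec y - of_int_vec x)
        \<le> norm (of_int_vec y - of_int_vec (x + w)) + norm (of_int_vec w)"
      using norm_triangle_ineq[of "of_int_vec y - of_int_vec (x + w)" "of_int_vec w"]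
      by (simp add: of_int_vec_add algebra_simps)
    ultimately have "norm (of_int_vec y - of_int_vec x) \<le> real (Suc k) * Mb"
      using bd[OF w] by (simp add: algebra_simps)
    then show "f y \<le> g y" using Suc.prems by blast
  qed
  then show ?case
    unfolding trans_iter_Suc_apply by (intro sum_mono mult_left_mono) (auto intro: pos)
qed

lemma weighted_norm_sq_add_centered:
  fixes v :: "'a \<Rightarrow> 'b::real_inner"
  assumes "sum p S = 1"
  shows "(\<Sum>w\<in>S. p w * (norm (a + (v w - (\<Sum>u\<in>S. p u *\<^sub>R v u))))\<^sup>2)
       = (norm a)\<^sup>2 + (\<Sum>w\<in>S. p w * (norm (v w - (\<Sum>u\<in>S. p u *\<^sub>R v u)))\<^sup>2)"
proof -
  define m where "m = (\<Sum>u\<in>S. p u *\<^sub>R v u)"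
  have "(\<Sum>w\<in>S. p w * (a \<bullet> (v w - m))) = a \<bullet> (\<Sum>w\<in>S. p w *\<^sub>R (v w - m))"
    by (simp add: inner_sum_right)
  also have "(\<Sum>w\<in>S. p w *\<^sub>R (v w - m)) = 0"
    by (simp add: scaleR_diff_right sum_subtractf m_def assms flip: scaleR_sum_left)
  finally have centered: "(\<Sum>w\<in>S. p w * (a \<bullet> (v w - m))) = 0"
    by simp
  have "p w * (norm (a + (v w - m)))\<^sup>2
      = p w * (norm a)\<^sup>2 + 2 * (p w * (a \<bullet> (v w - m))) + p w * (norm (v w - m))\<^sup>2" for w
    by (simp add: power2_norm_eq_inner inner_add algebra_simps inner_commute)
  then show ?thesis
    unfolding m_def[symmetric]
    by (simp add: sum.distrib centered assms flip: sum_distrib_left sum_distrib_right)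
qed

lemma trans_iter_norm_sq:
  assumes "sum p S = 1"
  shows "(trans_op p S ^^ k) (\<lambda>y. (norm (of_int_vec y - a))\<^sup>2) x
       = (norm (of_int_vec x + real k *\<^sub>R step_mean p S - a))\<^sup>2 + real k * step_var p S"
proof (induction k arbitrary: x)
  case 0
  then show ?case by simp
next
  case (Suc k)
  define m where "m = step_mean p S"
  define b where "b = of_int_vec x + real (Suc k) *\<^sub>R m - a"
  have shift: "of_int_vec (x + w) + real k *\<^sub>R m - a = b + (of_int_vec w - m)" for w
    by (simp add: b_def of_int_vec_add algebra_simps)
  have "(trans_op p S ^^ Suc k) (\<lambda>y. (norm (of_int_vec y - a))\<^sup>2) x
      = (\<Sum>w\<in>S. p w * ((norm (b + (of_int_vec w - m)))\<^sup>2 + real k * step_var p S))"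
    unfolding trans_iter_Suc_apply Suc.IH m_def[symmetric] shift ..
  also have "\<dots> = (\<Sum>w\<in>S. p w * (norm (b + (of_int_vec w - m)))\<^sup>2) + real k * step_var p S"
    by (simp add: distrib_left sum.distrib assms flip: sum_distrib_right)
  also have "\<dots> = (norm b)\<^sup>2 + step_var p S + real k * step_var p S"
    using weighted_norm_sq_add_centered[OF assms, of b of_int_vec]
    by (simp add: m_def step_mean_def step_var_def)
  finally show ?case
    by (simp add: b_def m_def algebra_simps)
qed

lemma trans_op_square_le:
  assumes pos: "\<And>w. w \<in> S \<Longrightarrow> 0 \<le> p w" and s1: "sum p S = 1"
  shows "(trans_op p S f x)\<^sup>2 \<le> trans_op p S (\<lambda>y. (f y)\<^sup>2) x"
proof -
  define A where "A = trans_op p S f x"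
  have "0 \<le> (\<Sum>w\<in>S. p w * (f (x + w) - A)\<^sup>2)"
    by (intro sum_nonneg mult_nonneg_nonneg pos) auto
  also have "\<dots> = (\<Sum>w\<in>S. p w * (f (x + w))\<^sup>2) - 2 * A * (\<Sum>w\<in>S. p w * f (x + w)) + A\<^sup>2 * sum p S"
    by (simp add: power2_diff algebra_simps sum.distrib sum_subtractf sum_distrib_left
        sum_distrib_right)
  also have "\<dots> = trans_op p S (\<lambda>y. (f y)\<^sup>2) x - A\<^sup>2"
    by (simp add: trans_op_def A_def s1 power2_eq_square)
  finally show ?thesis by (simp add: A_def)
qed

lemma trans_iter_abs_diff_le_quadratic:
  fixes f :: "int ^ 'd \<Rightarrow> real"
  assumes pos: "\<And>w. w \<in> S \<Longrightarrow> 0 \<le> p w" and s1: "sum p S = 1"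
    and bd: "\<And>w. w \<in> S \<Longrightarrow> norm (of_int_vec w) \<le> Mb" and K: "0 \<le> K"
    and f_le: "\<And>y. norm (of_int_vec y - of_int_vec x) \<le> real k * Mb \<Longrightarrow>
        \<bar>f y - a\<bar> \<le> \<alpha> + K * (norm (of_int_vec y - C))\<^sup>2"
  shows "\<bar>(trans_op p S ^^ k) f x - a\<bar>
      \<le> \<alpha> + K * ((norm (of_int_vec x + real k *\<^sub>R step_mean p S - C))\<^sup>2 + real k * step_var p S)"
proof -
  define g where "g = (\<lambda>y. \<alpha> + K * (norm (of_int_vec y - C))\<^sup>2)"
  have Pg: "(trans_op p S ^^ k) g x
      = \<alpha> + K * ((norm (of_int_vec x + real k *\<^sub>R step_mean p S - C))\<^sup>2 + real k * step_var p S)"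
    unfolding g_def by (simp add: trans_iter_add trans_iter_const[OF s1] trans_iter_scale
        trans_iter_norm_sq[OF s1])
  have Pf: "(trans_op p S ^^ k) (\<lambda>y. f y + (- a)) x = (trans_op p S ^^ k) f x - a"
    by (simp only: trans_iter_add trans_iter_const[OF s1])
  have "f y - a \<le> g y" "- g y \<le> f y - a"
    if "norm (of_int_vec y - of_int_vec x) \<le> real k * Mb" for y
    using f_le[OF that] unfolding g_def by linarith+
  then have "(trans_op p S ^^ k) (\<lambda>y. f y + (- a)) x \<le> (trans_op p S ^^ k) g x"
    and "(trans_op p S ^^ k) (\<lambda>y. (-1) * g y) x \<le> (trans_op p S ^^ k) (\<lambda>y. f y + (- a)) x"
    by (auto intro!: trans_iter_mono_local[OF pos bd])
  then show ?thesis
    unfolding Pf trans_iter_scale Pg[symmetric] by (simp add: abs_le_iff)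
qed

lemma finite_of_int_vec_norm_le: "finite {w :: int ^ 'd. norm (of_int_vec w) \<le> R}"
proof (rule finite_subset)
  define K where "K = \<lceil>R\<rceil>"
  show "{w :: int ^ 'd. norm (of_int_vec w) \<le> R} \<subseteq> vec_lambda ` (PiE UNIV (\<lambda>_. {-K..K}))"
  proof
    fix w :: "int ^ 'd" assume w: "w \<in> {w. norm (of_int_vec w) \<le> R}"
    have "\<bar>w $ i\<bar> \<le> K" for i
    proof -
      have "\<bar>of_int_vec w $ i\<bar> \<le> R"
        using w component_le_norm_cart[of "of_int_vec w" i] by simp
      then have "real_of_int \<bar>w $ i\<bar> \<le> real_of_int K"
        using le_of_int_ceiling[of R] by (simp add: K_def of_int_vec_def) linarith
      then show ?thesis by linarith
    qed
    then have "vec_nth w \<in> PiE UNIV (\<lambda>_. {-K..K})"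
      by (auto simp: abs_le_iff) (metis minus_le_iff)
    then show "w \<in> vec_lambda ` (PiE UNIV (\<lambda>_. {-K..K}))"
      by (intro image_eqI[of _ _ "vec_nth w"]) simp_all
  qed
qed (intro finite_imageI finite_PiE; simp)

lemma floor_vec_dist_le: "norm (of_int_vec (floor_vec n x) - real n *\<^sub>R x) \<le> real CARD('d)"
  for x :: "real ^ 'd"
proof -
  have "norm (of_int_vec (floor_vec n x) - real n *\<^sub>R x)
      \<le> (\<Sum>i\<in>UNIV. \<bar>(of_int_vec (floor_vec n x) - real n *\<^sub>R x) $ i\<bar>)"
    by (rule norm_le_l1_cart)
  also have "\<dots> \<le> (\<Sum>i\<in>(UNIV :: 'd set). 1)"
  proof (rule sum_mono)
    fix i :: 'd
    have "\<bar>real_of_int \<lfloor>real n * x $ i\<rfloor> - real n * x $ i\<bar> \<le> 1"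
      by linarith
    then show "\<bar>(of_int_vec (floor_vec n x) - real n *\<^sub>R x) $ i\<bar> \<le> 1"
      by (simp add: of_int_vec_def floor_vec_def)
  qed
  finally show ?thesis by simp
qed

lemma floor_vec_scaleR_of_int_vec: "n > 0 \<Longrightarrow> floor_vec n ((1 / real n) *\<^sub>R of_int_vec y) = y"
  by (simp add: floor_vec_def of_int_vec_def vec_eq_iff)

lemma finite_floor_vec_image: "finite (floor_vec n ` cball (0 :: real ^ 'd) R)"
proof (rule finite_subset[OF _ finite_of_int_vec_norm_le])
  show "floor_vec n ` cball (0 :: real ^ 'd) R
      \<subseteq> {w. norm (of_int_vec w) \<le> real n * \<bar>R\<bar> + real CARD('d)}"
  proof clarify
    fix x :: "real ^ 'd" assume "x \<in> cball 0 R"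
    then have "norm (real n *\<^sub>R x) \<le> real n * \<bar>R\<bar>"
      by (simp add: mult_left_mono)
    then show "norm (of_int_vec (floor_vec n x)) \<le> real n * \<bar>R\<bar> + real CARD('d)"
      using floor_vec_dist_le[of n x] norm_triangle_ineq2[of "of_int_vec (floor_vec n x)" "real n *\<^sub>R x"]
      by linarith
  qed
qed

lemma bounded_support_kernelE:
  fixes p :: "int ^ 'd \<Rightarrow> real"
  assumes "\<exists>R. \<forall>x. norm (of_int_vec x) > R \<longrightarrow> p x = 0" and "(p has_sum 1) UNIV"
  obtains Mb where "finite {w. p w \<noteq> 0}" and "sum p {w. p w \<noteq> 0} = 1"
    and "\<And>w. w \<in> {w. p w \<noteq> 0} \<Longrightarrow> norm (of_int_vec w) \<le> Mb"
proof -
  obtain R where "\<forall>x. norm (of_int_vec x) > R \<longrightarrow> p x = 0"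
    using assms(1) by blast
  then have bd: "norm (of_int_vec w) \<le> R" if "w \<in> {w. p w \<noteq> 0}" for w
    using that by force
  then have fin: "finite {w. p w \<noteq> 0}"
    by (intro finite_subset[OF _ finite_of_int_vec_norm_le[of R]]) auto
  have "(p has_sum 1) {w. p w \<noteq> 0}"
    using assms(2) by (subst has_sum_cong_neutral[of UNIV _ p]) auto
  then have "sum p {w. p w \<noteq> 0} = 1"
    using has_sum_finite_iff[OF fin, of p 1] by simp
  then show thesis
    by (rule that[OF fin _ bd])
qed

section \<open>The deterministic part\<close>

lemma abs_le_quadratic_majorant:
  fixes e r :: real
  assumes "0 < \<delta>" "e \<le> B" "0 \<le> B" "0 \<le> \<eta>" "r < \<delta> \<Longrightarrow> e \<le> \<eta>" "0 \<le> r"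
  shows "e \<le> \<eta> + B / \<delta>\<^sup>2 * r\<^sup>2"
proof (cases "r < \<delta>")
  case True
  then show ?thesis using assms by (simp add: add_increasing2)
next
  case False
  then have "1 \<le> r\<^sup>2 / \<delta>\<^sup>2"
    using assms(1) by (simp add: power_mono)
  then have "B \<le> B / \<delta>\<^sup>2 * r\<^sup>2"
    using mult_left_mono[of 1 "r\<^sup>2 / \<delta>\<^sup>2" B] assms(3) by simp
  then show ?thesis using assms by linarith
qed

lemma norm_reachable_le:
  fixes x :: "real ^ 'd" and y :: "int ^ 'd"
  assumes n: "n > 0" and Mb: "0 \<le> Mb" and k: "real k \<le> real n * t"
    and y: "norm (of_int_vec y - of_int_vec (floor_vec n x)) \<le> real k * Mb"
  shows "norm ((1 / real n) *\<^sub>R of_int_vec y) \<le> norm x + real CARD('d) + t * Mb"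
proof -
  have "norm (of_int_vec y) \<le> norm (of_int_vec y - of_int_vec (floor_vec n x))
      + norm (of_int_vec (floor_vec n x) - real n *\<^sub>R x) + norm (real n *\<^sub>R x)"
    using norm_triangle_ineq[of "of_int_vec y - of_int_vec (floor_vec n x)"
        "of_int_vec (floor_vec n x) - real n *\<^sub>R x"]
      norm_triangle_ineq[of "of_int_vec y - real n *\<^sub>R x" "real n *\<^sub>R x"]
    by simp
  also have "\<dots> \<le> real n * t * Mb + real CARD('d) + real n * norm x"
    using y floor_vec_dist_le[of n x] mult_right_mono[OF k Mb] by simp
  also have "\<dots> \<le> real n * (norm x + real CARD('d) + t * Mb)"
    using n mult_right_mono[of 1 "real n" "real CARD('d)"] by (simp add: algebra_simps)
  finally show ?thesis
    using n by (simp add: field_simps)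
qed

lemma norm_drift_error_le:
  fixes x m :: "real ^ 'd"
  assumes "\<bar>real k - real n * t\<bar> \<le> 1"
  shows "norm (of_int_vec (floor_vec n x) + real k *\<^sub>R m - real n *\<^sub>R (x + t *\<^sub>R m))
      \<le> real CARD('d) + norm m"
proof -
  have "of_int_vec (floor_vec n x) + real k *\<^sub>R m - real n *\<^sub>R (x + t *\<^sub>R m)
      = (of_int_vec (floor_vec n x) - real n *\<^sub>R x) + (real k - real n * t) *\<^sub>R m"
    by (simp add: algebra_simps)
  also have "norm \<dots> \<le> norm (of_int_vec (floor_vec n x) - real n *\<^sub>R x) + \<bar>real k - real n * t\<bar> * norm m"
    using norm_triangle_ineq[of "of_int_vec (floor_vec n x) - real n *\<^sub>R x" "(real k - real n * t) *\<^sub>R m"]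
    by simp
  also have "\<dots> \<le> real CARD('d) + 1 * norm m"
    using floor_vec_dist_le[of n x] assms by (intro add_mono mult_right_mono) auto
  finally show ?thesis by simp
qed

lemma abs_rescaled_diff_le_quadratic:
  fixes u :: "real ^ 'd \<Rightarrow> real" and f :: "int ^ 'd \<Rightarrow> real"
  assumes n: "n > 0" and \<delta>: "0 < \<delta>" and \<eta>: "0 \<le> \<eta>" and B: "0 \<le> B"
    and near: "\<And>z. norm (z - c) < \<delta> \<Longrightarrow> \<bar>u z - u c\<bar> \<le> \<eta>"
    and far: "\<And>z. z \<in> cball 0 R \<Longrightarrow> \<bar>u z - u c\<bar> \<le> B"
    and init: "\<And>z. z \<in> cball 0 R \<Longrightarrow> \<bar>f (floor_vec n z) / real n - u z\<bar> \<le> s"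
    and y: "norm ((1 / real n) *\<^sub>R of_int_vec y) \<le> R"
  shows "\<bar>f y / real n - u c\<bar> \<le> (s + \<eta>) + B / (\<delta>\<^sup>2 * (real n)\<^sup>2) * (norm (of_int_vec y - real n *\<^sub>R c))\<^sup>2"
proof -
  define z where "z = (1 / real n) *\<^sub>R of_int_vec y"
  have z: "z \<in> cball 0 R"
    using y by (simp add: z_def)
  have "of_int_vec y - real n *\<^sub>R c = real n *\<^sub>R (z - c)"
    using n by (simp add: z_def scaleR_diff_right)
  then have "B / \<delta>\<^sup>2 * (norm (z - c))\<^sup>2 = B / (\<delta>\<^sup>2 * (real n)\<^sup>2) * (norm (of_int_vec y - real n *\<^sub>R c))\<^sup>2"
    using n by (simp add: power_mult_distrib)
  moreover have "\<bar>u z - u c\<bar> \<le> \<eta> + B / \<delta>\<^sup>2 * (norm (z - c))\<^sup>2"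
    using near[of z] \<eta> B by (intro abs_le_quadratic_majorant[OF \<delta> far[OF z]]) auto
  moreover have "\<bar>f y / real n - u z\<bar> \<le> s"
    using init[OF z] n by (simp add: z_def floor_vec_scaleR_of_int_vec)
  ultimately show ?thesis by linarith
qed

lemma trans_iter_rescaled_bound:
  fixes u :: "real ^ 'd \<Rightarrow> real" and x :: "real ^ 'd" and t Mb :: real
    and p :: "int ^ 'd \<Rightarrow> real" and S :: "(int ^ 'd) set"
  defines "R \<equiv> norm x + real CARD('d) + t * Mb" and "c \<equiv> x + t *\<^sub>R step_mean p S"
  assumes pos: "\<And>w. w \<in> S \<Longrightarrow> 0 \<le> p w" and s1: "sum p S = 1"
    and bd: "\<And>w. w \<in> S \<Longrightarrow> norm (of_int_vec w) \<le> Mb" and Mb: "0 \<le> Mb"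
    and n: "n > 0" and t: "0 \<le> t" and \<delta>: "0 < \<delta>" and \<eta>: "0 \<le> \<eta>" and B: "0 \<le> B"
    and near: "\<And>z. norm (z - c) < \<delta> \<Longrightarrow> \<bar>u z - u c\<bar> \<le> \<eta>"
    and far: "\<And>z. z \<in> cball 0 R \<Longrightarrow> \<bar>u z - u c\<bar> \<le> B"
    and init: "\<And>z. z \<in> cball 0 R \<Longrightarrow> \<bar>f (floor_vec n z) / real n - u z\<bar> \<le> s"
  shows "\<bar>(trans_op p S ^^ nat \<lfloor>real n * t\<rfloor>) f (floor_vec n x) / real n - u c\<bar>
    \<le> s + \<eta> + B * ((real CARD('d) + norm (step_mean p S))\<^sup>2 + t * step_var p S) / (\<delta>\<^sup>2 * real n)"
proof -
  define k where "k = nat \<lfloor>real n * t\<rfloor>"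
  define K where "K = B / (\<delta>\<^sup>2 * (real n)\<^sup>2)"
  have k: "real k \<le> real n * t" "\<bar>real k - real n * t\<bar> \<le> 1"
    using t by (auto simp: k_def) linarith
  have V: "0 \<le> step_var p S"
    unfolding step_var_def by (intro sum_nonneg mult_nonneg_nonneg pos) auto
  have "\<bar>f y / real n - u c\<bar> \<le> (s + \<eta>) + K * (norm (of_int_vec y - real n *\<^sub>R c))\<^sup>2"
    if "norm (of_int_vec y - of_int_vec (floor_vec n x)) \<le> real k * Mb" for y
    using abs_rescaled_diff_le_quadratic[where u=u and c=c and R=R, OF n \<delta> \<eta> B near far init
        norm_reachable_le[OF n Mb k(1) that, folded R_def]]
    by (simp add: K_def)
  then have "\<bar>(trans_op p S ^^ k) (\<lambda>y. f y / real n) (floor_vec n x) - u c\<bar>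
      \<le> (s + \<eta>) + K * ((norm (of_int_vec (floor_vec n x) + real k *\<^sub>R step_mean p S - real n *\<^sub>R c))\<^sup>2
        + real k * step_var p S)"
    by (intro trans_iter_abs_diff_le_quadratic[OF pos s1 bd]) (simp_all add: K_def B)
  also have "\<dots> \<le> (s + \<eta>)
      + K * (real n * (real CARD('d) + norm (step_mean p S))\<^sup>2 + real n * (t * step_var p S))"
  proof (intro add_left_mono mult_left_mono add_mono)
    have "(norm (of_int_vec (floor_vec n x) + real k *\<^sub>R step_mean p S - real n *\<^sub>R c))\<^sup>2
        \<le> (real CARD('d) + norm (step_mean p S))\<^sup>2"
      unfolding c_def by (intro power_mono norm_drift_error_le k(2)) simp
    also have "\<dots> \<le> real n * (real CARD('d) + norm (step_mean p S))\<^sup>2"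
      using n by (simp add: mult_le_cancel_right1)
    finally show "(norm (of_int_vec (floor_vec n x) + real k *\<^sub>R step_mean p S - real n *\<^sub>R c))\<^sup>2
        \<le> real n * (real CARD('d) + norm (step_mean p S))\<^sup>2" .
    show "real k * step_var p S \<le> real n * (t * step_var p S)"
      using mult_right_mono[OF k(1) V] by (simp add: mult.assoc)
  qed (simp add: K_def B)
  also have "\<dots> = s + \<eta> + B * ((real CARD('d) + norm (step_mean p S))\<^sup>2 + t * step_var p S) / (\<delta>\<^sup>2 * real n)"
    using n \<delta> by (simp add: K_def power2_eq_square field_simps)
  also have "(trans_op p S ^^ k) (\<lambda>y. f y / real n) = (\<lambda>z. (trans_op p S ^^ k) f z / real n)"
    using trans_iter_scale[where c="1 / real n" and f=f] by simp
  finally show ?thesis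
    by (simp add: k_def)
qed

lemma trans_iter_rescaled_approx:
  fixes u0 :: "real ^ 'd \<Rightarrow> real" and x :: "real ^ 'd"
  assumes pos: "\<And>w. w \<in> S \<Longrightarrow> 0 \<le> p w" and s1: "sum p S = 1"
    and bd: "\<And>w. w \<in> S \<Longrightarrow> norm (of_int_vec w) \<le> Mb" and Mb: "0 \<le> Mb"
    and u0: "continuous_on UNIV u0" and t: "0 \<le> t" and \<eta>: "0 < \<eta>"
  obtains C where
    "\<And>n f s. n > 0 \<Longrightarrow>
      (\<And>z. z \<in> cball 0 (norm x + real CARD('d) + t * Mb) \<Longrightarrow> \<bar>f (floor_vec n z) / real n - u0 z\<bar> \<le> s) \<Longrightarrow>
      \<bar>(trans_op p S ^^ nat \<lfloor>real n * t\<rfloor>) f (floor_vec n x) / real n - u0 (x + t *\<^sub>R step_mean p S)\<bar>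
        \<le> s + \<eta> + C / real n"
proof -
  define R where "R = norm x + real CARD('d) + t * Mb"
  define c where "c = x + t *\<^sub>R step_mean p S"
  obtain \<delta> where \<delta>: "0 < \<delta>" and near: "\<And>z. dist z c < \<delta> \<Longrightarrow> dist (u0 z) (u0 c) < \<eta>"
    using continuous_on_iff[THEN iffD1, OF u0, rule_format, OF UNIV_I \<eta>] by auto
  have "bounded (u0 ` cball 0 R)"
    by (intro compact_imp_bounded compact_continuous_image continuous_on_subset[OF u0]) auto
  then obtain B0 where B0: "\<And>z. z \<in> cball 0 R \<Longrightarrow> \<bar>u0 z\<bar> \<le> B0"
    unfolding bounded_real by blast
  have far: "\<bar>u0 z - u0 c\<bar> \<le> \<bar>B0\<bar> + \<bar>u0 c\<bar>" if "z \<in> cball 0 R" for z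
    using B0[OF that] by simp
  have near': "\<bar>u0 z - u0 c\<bar> \<le> \<eta>" if "norm (z - c) < \<delta>" for z
    using near[of z] that by (simp add: dist_norm dist_real_def)
  show ?thesis
    using trans_iter_rescaled_bound[where u=u0 and x=x, OF pos s1 bd Mb _ t \<delta> _ _
        near'[unfolded c_def] far[unfolded R_def c_def]] \<eta>
      that[of "(\<bar>B0\<bar> + \<bar>u0 c\<bar>) * ((real CARD('d) + norm (step_mean p S))\<^sup>2 + t * step_var p S) / \<delta>\<^sup>2"]
    by (simp add: c_def field_simps)
qed

section \<open>The noise\<close>

inductive_set noise_span :: "(int \<Rightarrow> 'x \<Rightarrow> 'w \<Rightarrow> real) \<Rightarrow> int \<Rightarrow> ('w \<Rightarrow> real) set"
  for \<xi> :: "int \<Rightarrow> 'x \<Rightarrow> 'w \<Rightarrow> real" and k :: int where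
  base: "s \<le> k \<Longrightarrow> \<xi> s y \<in> noise_span \<xi> k"
| zero: "(\<lambda>\<omega>. 0) \<in> noise_span \<xi> k"
| add: "f \<in> noise_span \<xi> k \<Longrightarrow> g \<in> noise_span \<xi> k \<Longrightarrow> (\<lambda>\<omega>. f \<omega> + g \<omega>) \<in> noise_span \<xi> k"
| scale: "f \<in> noise_span \<xi> k \<Longrightarrow> (\<lambda>\<omega>. c * f \<omega>) \<in> noise_span \<xi> k"

lemma noise_span_mono: "f \<in> noise_span \<xi> k \<Longrightarrow> k \<le> k' \<Longrightarrow> f \<in> noise_span \<xi> k'"
  by (induction rule: noise_span.induct) (auto intro: noise_span.intros)

lemma noise_span_sum:
  "finite A \<Longrightarrow> (\<And>a. a \<in> A \<Longrightarrow> F a \<in> noise_span \<xi> k) \<Longrightarrow> (\<lambda>\<omega>. \<Sum>a\<in>A. F a \<omega>) \<in> noise_span \<xi> k"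
  by (induction A rule: finite_induct) (auto intro: noise_span.intros)

lemma integrable_mult_of_square_integrable:
  fixes f g :: "'w \<Rightarrow> real"
  assumes "f \<in> borel_measurable M" "g \<in> borel_measurable M"
    "integrable M (\<lambda>\<omega>. (f \<omega>)\<^sup>2)" "integrable M (\<lambda>\<omega>. (g \<omega>)\<^sup>2)"
  shows "integrable M (\<lambda>\<omega>. f \<omega> * g \<omega>)"
proof (rule Bochner_Integration.integrable_bound[where f="\<lambda>\<omega>. (f \<omega>)\<^sup>2 + (g \<omega>)\<^sup>2"])
  have "\<bar>a * b\<bar> \<le> a\<^sup>2 + b\<^sup>2" for a b :: real
  proof -
    have "2 * \<bar>a\<bar> * \<bar>b\<bar> \<le> a\<^sup>2 + b\<^sup>2" "0 \<le> \<bar>a\<bar> * \<bar>b\<bar>"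
      using sum_squares_bound[of "\<bar>a\<bar>" "\<bar>b\<bar>"] by simp_all
    then show ?thesis unfolding abs_mult by linarith
  qed
  then show "AE x in M. norm (f x * g x) \<le> norm ((f x)\<^sup>2 + (g x)\<^sup>2)" by simp
qed (use assms in simp_all)

lemma integral_square_eq_of_distr_eq:
  fixes X Y :: "'w \<Rightarrow> real"
  assumes "X \<in> borel_measurable M" "Y \<in> borel_measurable M" "distr M borel X = distr M borel Y"
  shows "integral\<^sup>L M (\<lambda>\<omega>. (X \<omega>)\<^sup>2) = integral\<^sup>L M (\<lambda>\<omega>. (Y \<omega>)\<^sup>2)"
proof -
  have sq: "(\<lambda>a::real. a\<^sup>2) \<in> borel_measurable borel" by measurable
  show ?thesis
    using integral_distr[OF assms(1) sq] integral_distr[OF assms(2) sq] assms(3) by simp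
qed

locale noise_setup =
  fixes M :: "'w measure" and \<xi> :: "int \<Rightarrow> 'x \<Rightarrow> 'w \<Rightarrow> real"
  assumes prob: "prob_space M"
    and indep: "prob_space.indep_vars M (\<lambda>_. borel) (\<lambda>(t, x). \<xi> t x) UNIV"
    and mean: "\<And>t x. integrable M (\<xi> t x) \<and> integral\<^sup>L M (\<xi> t x) = 0"
    and var: "\<And>t x. integrable M (\<lambda>\<omega>. (\<xi> t x \<omega>)\<^sup>2)"
begin

lemma xi_measurable: "\<xi> t x \<in> borel_measurable M"
  using indep unfolding prob_space.indep_vars_def[OF prob] by (metis case_prod_conv UNIV_I)

lemma noise_span_square_integrable:
  "f \<in> noise_span \<xi> k \<Longrightarrow> f \<in> borel_measurable M \<and> integrable M (\<lambda>\<omega>. (f \<omega>)\<^sup>2)"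
proof (induction rule: noise_span.induct)
  case (add f g)
  have "integrable M (\<lambda>\<omega>. (f \<omega>)\<^sup>2 + 2 * (f \<omega> * g \<omega>) + (g \<omega>)\<^sup>2)"
    using add integrable_mult_of_square_integrable[of f M g] by simp
  then show ?case
    using add borel_measurable_add[of f M g] by (simp add: power2_sum algebra_simps)
qed (auto simp: xi_measurable var power_mult_distrib)

lemma integral_xi_mult_xi:
  assumes "(s, y) \<noteq> (j, x)"
  shows "integral\<^sup>L M (\<lambda>\<omega>. \<xi> s y \<omega> * \<xi> j x \<omega>) = 0"
proof -
  have "prob_space.indep_vars M (\<lambda>_. borel) (\<lambda>(t, x). \<xi> t x) {(s, y), (j, x)}"
    using prob_space.indep_vars_subset[OF prob indep] by blast
  then have "integral\<^sup>L M (\<lambda>\<omega>. \<Prod>i\<in>{(s, y), (j, x)}. (\<lambda>(t, x). \<xi> t x) i \<omega>)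
      = (\<Prod>i\<in>{(s, y), (j, x)}. integral\<^sup>L M ((\<lambda>(t, x). \<xi> t x) i))"
    by (intro prob_space.indep_vars_lebesgue_integral[OF prob]) (auto simp: mean)
  then show ?thesis using assms mean by simp
qed

lemma noise_span_orthogonal:
  "f \<in> noise_span \<xi> k \<Longrightarrow> k < j \<Longrightarrow>
    integrable M (\<lambda>\<omega>. f \<omega> * \<xi> j x \<omega>) \<and> integral\<^sup>L M (\<lambda>\<omega>. f \<omega> * \<xi> j x \<omega>) = 0"
proof (induction rule: noise_span.induct)
  case (base s y)
  then show ?case
    using integrable_mult_of_square_integrable[OF xi_measurable xi_measurable var var]
      integral_xi_mult_xi[of s y j x] by auto
qed (simp_all add: distrib_right mult.assoc)

end

locale harness = noise_setup M \<xi>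
  for M :: "'w measure" and \<xi> :: "int \<Rightarrow> int ^ 'd \<Rightarrow> 'w \<Rightarrow> real" +
  fixes p :: "int ^ 'd \<Rightarrow> real" and S :: "(int ^ 'd) set" and Mb \<sigma>2 :: real
    and h :: "nat \<Rightarrow> nat \<Rightarrow> int ^ 'd \<Rightarrow> 'w \<Rightarrow> real"
  assumes finite_S: "finite S" and p_nonneg: "\<And>w. w \<in> S \<Longrightarrow> 0 \<le> p w" and sum_p: "sum p S = 1"
    and step_bound: "\<And>w. w \<in> S \<Longrightarrow> norm (of_int_vec w) \<le> Mb"
    and xi_second_moment: "\<And>t x. integral\<^sup>L M (\<lambda>\<omega>. (\<xi> t x \<omega>)\<^sup>2) = \<sigma>2"
    and h_Suc: "\<And>n t x \<omega>. \<omega> \<in> space M \<Longrightarrow>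
      h n (Suc t) x \<omega> = trans_op p S (\<lambda>y. h n t y \<omega>) x + \<xi> (int t + 1) x \<omega>"
    and h0_measurable: "\<And>n y. h n 0 y \<in> borel_measurable M"
begin

definition noise :: "nat \<Rightarrow> nat \<Rightarrow> int ^ 'd \<Rightarrow> 'w \<Rightarrow> real" where
  "noise n k y \<omega> = h n k y \<omega> - (trans_op p S ^^ k) (\<lambda>z. h n 0 z \<omega>) y"

lemma Mb_nonneg: "0 \<le> Mb"
proof -
  obtain w where "w \<in> S" using sum_p by force
  then show ?thesis using step_bound[of w] norm_ge_zero[of "of_int_vec w"] by linarith
qed

lemma noise_Suc:
  "\<omega> \<in> space M \<Longrightarrow> noise n (Suc k) x \<omega> = trans_op p S (\<lambda>y. noise n k y \<omega>) x + \<xi> (int k + 1) x \<omega>"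
  by (simp add: noise_def h_Suc trans_op_def sum_subtractf right_diff_distrib)

lemma noise_in_span:
  obtains F where "\<And>y. F y \<in> noise_span \<xi> (int k)"
    and "\<And>y \<omega>. \<omega> \<in> space M \<Longrightarrow> noise n k y \<omega> = F y \<omega>"
proof (induction k arbitrary: thesis)
  case 0
  show ?case by (rule 0[of "\<lambda>_ _. 0"]) (simp_all add: noise_def noise_span.zero)
next
  case (Suc k)
  obtain F where F: "\<And>y. F y \<in> noise_span \<xi> (int k)"
    and eq: "\<And>y \<omega>. \<omega> \<in> space M \<Longrightarrow> noise n k y \<omega> = F y \<omega>"
    using Suc.IH by blast
  show ?case
  proof (rule Suc.prems)
    fix y
    have "(\<lambda>\<omega>. \<Sum>w\<in>S. p w * F (y + w) \<omega>) \<in> noise_span \<xi> (int (Suc k))"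
      using finite_S F by (intro noise_span_mono[OF noise_span_sum]) (auto intro: noise_span.scale)
    then show "(\<lambda>\<omega>. (\<Sum>w\<in>S. p w * F (y + w) \<omega>) + \<xi> (int k + 1) y \<omega>) \<in> noise_span \<xi> (int (Suc k))"
      by (rule noise_span.add) (simp add: noise_span.base)
  next
    fix y \<omega> assume "\<omega> \<in> space M"
    then show "noise n (Suc k) y \<omega> = (\<Sum>w\<in>S. p w * F (y + w) \<omega>) + \<xi> (int k + 1) y \<omega>"
      by (simp add: noise_Suc eq trans_op_def)
  qed
qed

lemma noise_square_integrable:
  "noise n k y \<in> borel_measurable M \<and> integrable M (\<lambda>\<omega>. (noise n k y \<omega>)\<^sup>2)"
proof -
  obtain F where F: "F y \<in> noise_span \<xi> (int k)" and eq: "\<And>\<omega>. \<omega> \<in> space M \<Longrightarrow> noise n k y \<omega> = F y \<omega>"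
    using noise_in_span by metis
  show ?thesis
    using noise_span_square_integrable[OF F] measurable_cong[of M "noise n k y" "F y"]
      Bochner_Integration.integrable_cong[of M M "\<lambda>\<omega>. (noise n k y \<omega>)\<^sup>2" "\<lambda>\<omega>. (F y \<omega>)\<^sup>2"]
    by (simp add: eq)
qed

lemma noise_second_moment: "integral\<^sup>L M (\<lambda>\<omega>. (noise n k x \<omega>)\<^sup>2) \<le> real k * \<sigma>2"
proof (induction k arbitrary: x)
  case 0
  then show ?case by (simp add: noise_def)
next
  case (Suc k)
  obtain F where F: "\<And>y. F y \<in> noise_span \<xi> (int k)"
    and eq: "\<And>y \<omega>. \<omega> \<in> space M \<Longrightarrow> noise n k y \<omega> = F y \<omega>"
    using noise_in_span by metis
  define T where "T \<omega> = (\<Sum>w\<in>S. p w * F (x + w) \<omega>)" for \<omega>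
  define g where "g = \<xi> (int k + 1) x"
  have T: "T \<in> noise_span \<xi> (int k)"
    unfolding T_def using finite_S F by (intro noise_span_sum noise_span.scale)
  have F_sq: "integrable M (\<lambda>\<omega>. (F y \<omega>)\<^sup>2)" for y
    using noise_span_square_integrable[OF F] by blast
  have F_moment: "integral\<^sup>L M (\<lambda>\<omega>. (F y \<omega>)\<^sup>2) \<le> real k * \<sigma>2" for y
    using Suc.IH[of y] Bochner_Integration.integral_cong[OF refl, of M "\<lambda>\<omega>. (noise n k y \<omega>)\<^sup>2"]
    by (simp add: eq)
  have "integral\<^sup>L M (\<lambda>\<omega>. (noise n (Suc k) x \<omega>)\<^sup>2)
      = integral\<^sup>L M (\<lambda>\<omega>. (T \<omega>)\<^sup>2 + 2 * (T \<omega> * g \<omega>) + (g \<omega>)\<^sup>2)"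
    by (rule Bochner_Integration.integral_cong)
      (simp_all add: noise_Suc trans_op_def eq T_def g_def power2_sum algebra_simps)
  also have "\<dots> = integral\<^sup>L M (\<lambda>\<omega>. (T \<omega>)\<^sup>2) + \<sigma>2"
    \<comment> \<open>the cross term vanishes: \<open>T\<close> only involves noise up to time \<open>k\<close>\<close>
    using noise_span_square_integrable[OF T] noise_span_orthogonal[OF T, of "int k + 1" x]
      var[of "int k + 1" x] xi_second_moment by (simp add: g_def)
  also have "integral\<^sup>L M (\<lambda>\<omega>. (T \<omega>)\<^sup>2) \<le> integral\<^sup>L M (\<lambda>\<omega>. \<Sum>w\<in>S. p w * (F (x + w) \<omega>)\<^sup>2)"
    using noise_span_square_integrable[OF T] F_sq
      trans_op_square_le[OF p_nonneg sum_p, of "\<lambda>y. F y _" x]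
    by (intro integral_mono) (simp_all add: T_def trans_op_def)
  also have "\<dots> = (\<Sum>w\<in>S. p w * integral\<^sup>L M (\<lambda>\<omega>. (F (x + w) \<omega>)\<^sup>2))"
    using F_sq by simp
  also have "\<dots> \<le> (\<Sum>w\<in>S. p w * (real k * \<sigma>2))"
    by (intro sum_mono mult_left_mono F_moment p_nonneg)
  also have "\<dots> = real k * \<sigma>2"
    by (simp add: sum_p flip: sum_distrib_right)
  finally show ?case by (simp add: algebra_simps)
qed

lemma noise_tail_bound:
  assumes "0 < a"
  shows "measure M {\<omega> \<in> space M. a\<^sup>2 \<le> (noise n k y \<omega>)\<^sup>2} \<le> real k * \<sigma>2 / a\<^sup>2"
proof -
  have "measure M {\<omega> \<in> space M. a\<^sup>2 \<le> (noise n k y \<omega>)\<^sup>2}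
      \<le> integral\<^sup>L M (\<lambda>\<omega>. (noise n k y \<omega>)\<^sup>2) / a\<^sup>2"
    using noise_square_integrable assms by (intro integral_Markov_inequality_measure) auto
  also have "\<dots> \<le> real k * \<sigma>2 / a\<^sup>2"
    by (intro divide_right_mono noise_second_moment) simp
  finally show ?thesis .
qed

end

section \<open>Measurability of the initial error\<close>

lemma lipschitz_SUP_abs_diff:
  fixes g :: "'a \<Rightarrow> real"
  assumes ne: "C \<noteq> {}" and bdd: "bounded (g ` C)"
  shows "1-lipschitz_on UNIV (\<lambda>a. SUP x\<in>C. \<bar>a - g x\<bar>)"
proof -
  obtain G where G: "\<And>x. x \<in> C \<Longrightarrow> \<bar>g x\<bar> \<le> G"
    using bdd unfolding bounded_real by blast
  have bdd_abs: "bdd_above ((\<lambda>x. \<bar>a - g x\<bar>) ` C)" for a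
    by (rule bdd_aboveI2[where M="\<bar>a\<bar> + G"]) (use G in force)
  have le: "(SUP x\<in>C. \<bar>a - g x\<bar>) \<le> (SUP x\<in>C. \<bar>b - g x\<bar>) + \<bar>a - b\<bar>" for a b
  proof (rule cSUP_least[OF ne])
    fix x assume "x \<in> C"
    then have "\<bar>b - g x\<bar> \<le> (SUP x\<in>C. \<bar>b - g x\<bar>)"
      by (rule cSUP_upper[OF _ bdd_abs])
    then show "\<bar>a - g x\<bar> \<le> (SUP x\<in>C. \<bar>b - g x\<bar>) + \<bar>a - b\<bar>" by linarith
  qed
  show ?thesis
  proof (rule lipschitz_onI)
    fix a b :: real
    show "dist (SUP x\<in>C. \<bar>a - g x\<bar>) (SUP x\<in>C. \<bar>b - g x\<bar>) \<le> 1 * dist a b"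
      using le[of a b] le[of b a] by (simp add: dist_real_def abs_minus_commute abs_le_iff)
  qed simp
qed

lemma bdd_above_abs_diff_floor_vec:
  fixes u :: "real ^ 'd \<Rightarrow> real"
  assumes "continuous_on UNIV u"
  shows "bdd_above ((\<lambda>x. \<bar>H (floor_vec n x) / real n - u x\<bar>) ` cball 0 R)"
proof -
  have "bounded (u ` cball 0 R)"
    by (intro compact_imp_bounded compact_continuous_image continuous_on_subset[OF assms]) auto
  then obtain B where B: "\<And>x. x \<in> cball 0 R \<Longrightarrow> \<bar>u x\<bar> \<le> B"
    unfolding bounded_real by blast
  define Y where "Y = floor_vec n ` cball (0 :: real ^ 'd) R"
  have "\<bar>H (floor_vec n x) / real n - u x\<bar> \<le> Max ((\<lambda>y. \<bar>H y / real n\<bar>) ` Y) + B"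
    if x: "x \<in> cball 0 R" for x
  proof -
    have "\<bar>H (floor_vec n x) / real n\<bar> \<le> Max ((\<lambda>y. \<bar>H y / real n\<bar>) ` Y)"
      using x finite_floor_vec_image by (intro Max_ge) (auto simp: Y_def)
    then show ?thesis using B[OF x] by linarith
  qed
  then show ?thesis by (rule bdd_aboveI2)
qed

lemma SUP_floor_vec_eq_Max:
  fixes H :: "int ^ 'd \<Rightarrow> real" and u :: "real ^ 'd \<Rightarrow> real"
  assumes u: "continuous_on UNIV u" and ne: "cball (0 :: real ^ 'd) R \<noteq> {}"
  shows "(SUP x\<in>cball 0 R. \<bar>H (floor_vec n x) / real n - u x\<bar>)
    = (MAX y\<in>floor_vec n ` cball 0 R. SUP x\<in>{x \<in> cball 0 R. floor_vec n x = y}. \<bar>H y / real n - u x\<bar>)"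
    (is "?sup = (MAX y\<in>?Y. ?cell y)")
proof (rule antisym)
  have Y: "finite ?Y" "?Y \<noteq> {}"
    using finite_floor_vec_image ne by auto
  have bdd: "bdd_above ((\<lambda>x. \<bar>H (floor_vec n x) / real n - u x\<bar>) ` cball 0 R)"
    by (rule bdd_above_abs_diff_floor_vec[OF u])
  show "?sup \<le> (MAX y\<in>?Y. ?cell y)"
  proof (rule cSUP_least[OF ne])
    fix x :: "real ^ 'd" assume x: "x \<in> cball 0 R"
    have "bdd_above ((\<lambda>x'. \<bar>H (floor_vec n x) / real n - u x'\<bar>)
        ` {x' \<in> cball 0 R. floor_vec n x' = floor_vec n x})"
      by (rule bdd_above_mono[OF bdd_above_abs_diff_floor_vec[OF u, of "\<lambda>_. H (floor_vec n x)" n R]]) auto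
    then have "\<bar>H (floor_vec n x) / real n - u x\<bar> \<le> ?cell (floor_vec n x)"
      using x by (intro cSUP_upper) auto
    also have "\<dots> \<le> (MAX y\<in>?Y. ?cell y)"
      using x Y by (intro Max_ge) auto
    finally show "\<bar>H (floor_vec n x) / real n - u x\<bar> \<le> (MAX y\<in>?Y. ?cell y)" .
  qed
  have "(MAX y\<in>?Y. ?cell y) \<in> ?cell ` ?Y"
    using Y by (intro Max_in) auto
  then obtain y where y: "y \<in> ?Y" and max: "(MAX y\<in>?Y. ?cell y) = ?cell y"
    by auto
  have "?cell y \<le> ?sup"
  proof (rule cSUP_least)
    show "{x \<in> cball 0 R. floor_vec n x = y} \<noteq> {}" using y by auto
    fix z assume "z \<in> {x \<in> cball 0 R. floor_vec n x = y}"
    then show "\<bar>H y / real n - u z\<bar> \<le> ?sup"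
      using cSUP_upper[OF _ bdd, of z] by auto
  qed
  then show "(MAX y\<in>?Y. ?cell y) \<le> ?sup"
    using max by simp
qed

text \<open>On each of the finitely many cells \<open>{x. floor_vec n x = y}\<close> the supremum is a continuous
  function of the single value \<open>H y \<omega>\<close>.\<close>

lemma borel_measurable_SUP_floor_vec:
  fixes H :: "int ^ 'd \<Rightarrow> 'w \<Rightarrow> real" and u :: "real ^ 'd \<Rightarrow> real"
  assumes H: "\<And>y. H y \<in> borel_measurable M" and u: "continuous_on UNIV u"
  shows "(\<lambda>\<omega>. SUP x\<in>cball 0 R. \<bar>H (floor_vec n x) \<omega> / real n - u x\<bar>) \<in> borel_measurable M"
proof (cases "cball (0 :: real ^ 'd) R = {}")
  case False
  define C where "C y = {x \<in> cball (0 :: real ^ 'd) R. floor_vec n x = y}" for y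
  have "(\<lambda>\<omega>. MAX y\<in>floor_vec n ` cball (0 :: real ^ 'd) R. SUP x\<in>C y. \<bar>H y \<omega> / real n - u x\<bar>)
      \<in> borel_measurable M"
  proof (rule borel_measurable_Max[OF finite_floor_vec_image])
    fix y assume y: "y \<in> floor_vec n ` cball (0 :: real ^ 'd) R"
    have "bounded (u ` cball 0 R)"
      by (intro compact_imp_bounded compact_continuous_image continuous_on_subset[OF u]) auto
    then have "bounded (u ` C y)"
      by (rule bounded_subset) (auto simp: C_def)
    moreover have "C y \<noteq> {}"
      using y by (auto simp: C_def)
    ultimately have "continuous_on UNIV (\<lambda>a. SUP x\<in>C y. \<bar>a - u x\<bar>)"
      by (intro lipschitz_on_continuous_on[OF lipschitz_SUP_abs_diff])
    then have "continuous_on UNIV (\<lambda>a. SUP x\<in>C y. \<bar>a / real n - u x\<bar>)"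
      by (rule continuous_on_compose2[of UNIV _ UNIV "\<lambda>a. a / real n"])
        (auto simp: divide_inverse intro!: continuous_intros)
    then show "(\<lambda>\<omega>. SUP x\<in>C y. \<bar>H y \<omega> / real n - u x\<bar>) \<in> borel_measurable M"
      using borel_measurable_continuous_onI measurable_compose[OF H] by blast
  qed
  moreover have "(SUP x\<in>cball 0 R. \<bar>H (floor_vec n x) \<omega> / real n - u x\<bar>)
      = (MAX y\<in>floor_vec n ` cball 0 R. SUP x\<in>C y. \<bar>H y \<omega> / real n - u x\<bar>)" for \<omega>
    unfolding C_def by (rule SUP_floor_vec_eq_Max[OF u False])
  ultimately show ?thesis
    by simp
qed simp

lemma measurable_of_indep_set_gen_sigma:
  assumes "prob_space M" and "prob_space.indep_set M A (gen_sigma M H I)" and "i \<in> I"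
  shows "H i \<in> borel_measurable M"
proof (rule measurableI)
  have "gen_sigma M H I \<subseteq> sets M"
    using assms(2) unfolding prob_space.indep_set_def[OF assms(1)] prob_space.indep_sets_def[OF assms(1)]
    by (metis UNIV_I bool.case(2))
  moreover fix B :: "real set" assume "B \<in> sets borel"
  then have "H i -` B \<inter> space M \<in> gen_sigma M H I"
    unfolding gen_sigma_def using assms(3) by (intro sigma_sets.Basic) blast
  ultimately show "H i -` B \<inter> space M \<in> sets M" by blast
qed simp

lemma (in harness) measure_deviation_le:
  assumes e: "e \<in> borel_measurable M" and n: "0 < n" and \<epsilon>: "0 < \<epsilon>"
    and det: "\<And>\<omega>. \<omega> \<in> space M \<Longrightarrow>
      \<bar>(trans_op p S ^^ k) (\<lambda>y. h n 0 y \<omega>) y0 / real n - a\<bar> \<le> e \<omega>"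
  shows "measure M {\<omega> \<in> space M. \<epsilon> \<le> \<bar>h n k y0 \<omega> / real n - a\<bar>}
    \<le> measure M {\<omega> \<in> space M. \<epsilon> / 2 \<le> e \<omega>} + 4 * real k * \<sigma>2 / (real n * \<epsilon>)\<^sup>2"
proof -
  define E where "E = {\<omega> \<in> space M. \<epsilon> / 2 \<le> e \<omega>}"
  define Z where "Z = {\<omega> \<in> space M. (real n * \<epsilon> / 2)\<^sup>2 \<le> (noise n k y0 \<omega>)\<^sup>2}"
  have "{\<omega> \<in> space M. \<epsilon> \<le> \<bar>h n k y0 \<omega> / real n - a\<bar>} \<subseteq> E \<union> Z"
  proof (rule subsetI, rule ccontr)
    fix \<omega> assume \<omega>: "\<omega> \<in> {\<omega> \<in> space M. \<epsilon> \<le> \<bar>h n k y0 \<omega> / real n - a\<bar>}" and "\<omega> \<notin> E \<union> Z"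
    then have "e \<omega> < \<epsilon> / 2" and "\<not> (real n * \<epsilon> / 2)\<^sup>2 \<le> (noise n k y0 \<omega>)\<^sup>2"
      by (auto simp: E_def Z_def)
    then have "\<bar>noise n k y0 \<omega>\<bar> < real n * \<epsilon> / 2"
      using \<epsilon> abs_le_square_iff[of "real n * \<epsilon> / 2" "noise n k y0 \<omega>"] by auto
    then have "\<bar>noise n k y0 \<omega> / real n\<bar> < \<epsilon> / 2"
      using n by (simp add: abs_divide field_simps)
    moreover have "h n k y0 \<omega> / real n
        = (trans_op p S ^^ k) (\<lambda>y. h n 0 y \<omega>) y0 / real n + noise n k y0 \<omega> / real n"
      by (simp add: noise_def diff_divide_distrib)
    moreover have "\<epsilon> \<le> \<bar>h n k y0 \<omega> / real n - a\<bar>" and "\<omega> \<in> space M"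
      using \<omega> by blast+
    ultimately show False
      using det[of \<omega>] \<open>e \<omega> < \<epsilon> / 2\<close> by arith
  qed
  moreover have "E \<in> sets M"
    unfolding E_def using e by measurable
  moreover have "Z \<in> sets M"
  proof -
    have "(\<lambda>\<omega>. (noise n k y0 \<omega>)\<^sup>2) \<in> borel_measurable M"
      using noise_square_integrable by (intro borel_measurable_power) blast
    then show ?thesis
      unfolding Z_def by measurable
  qed
  ultimately have "measure M {\<omega> \<in> space M. \<epsilon> \<le> \<bar>h n k y0 \<omega> / real n - a\<bar>} \<le> measure M E + measure M Z"
    by (meson finite_measure.finite_measure_mono[OF prob_space.finite_measure[OF prob]]
        measure_Un_le order_trans sets.Un)
  also have "measure M Z \<le> real k * \<sigma>2 / (real n * \<epsilon> / 2)\<^sup>2"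
    unfolding Z_def using n \<epsilon> by (intro noise_tail_bound) simp
  finally show ?thesis
    by (simp add: E_def power_divide mult_ac)
qed

lemma (in harness) measure_deviation_le_initial_error:
  fixes u0 :: "real ^ 'd \<Rightarrow> real"
  assumes u0: "continuous_on UNIV u0" and n: "0 < n" and \<epsilon>: "0 < \<epsilon>"
    and det: "\<And>f s. (\<And>z. z \<in> cball 0 R \<Longrightarrow> \<bar>f (floor_vec n z) / real n - u0 z\<bar> \<le> s) \<Longrightarrow>
      \<bar>(trans_op p S ^^ k) f y0 / real n - a\<bar> \<le> s + \<epsilon> / 4"
  shows "measure M {\<omega> \<in> space M. \<epsilon> \<le> \<bar>h n k y0 \<omega> / real n - a\<bar>}
    \<le> measure M {\<omega> \<in> space M.
        \<epsilon> / 4 \<le> (SUP z\<in>cball 0 R. \<bar>h n 0 (floor_vec n z) \<omega> / real n - u0 z\<bar>)}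
      + 4 * real k * \<sigma>2 / (real n * \<epsilon>)\<^sup>2"
proof -
  define err where "err \<omega> = (SUP z\<in>cball 0 R. \<bar>h n 0 (floor_vec n z) \<omega> / real n - u0 z\<bar>)" for \<omega>
  have "measure M {\<omega> \<in> space M. \<epsilon> \<le> \<bar>h n k y0 \<omega> / real n - a\<bar>}
      \<le> measure M {\<omega> \<in> space M. \<epsilon> / 2 \<le> err \<omega> + \<epsilon> / 4} + 4 * real k * \<sigma>2 / (real n * \<epsilon>)\<^sup>2"
  proof (rule measure_deviation_le[OF _ n \<epsilon>])
    have "err \<in> borel_measurable M"
      unfolding err_def[abs_def] by (rule borel_measurable_SUP_floor_vec[OF h0_measurable u0])
    then show "(\<lambda>\<omega>. err \<omega> + \<epsilon> / 4) \<in> borel_measurable M"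
      by measurable
    fix \<omega>
    have "\<bar>h n 0 (floor_vec n z) \<omega> / real n - u0 z\<bar> \<le> err \<omega>" if "z \<in> cball 0 R" for z
      unfolding err_def using that by (rule cSUP_upper[OF _ bdd_above_abs_diff_floor_vec[OF u0]])
    then show "\<bar>(trans_op p S ^^ k) (\<lambda>y. h n 0 y \<omega>) y0 / real n - a\<bar> \<le> err \<omega> + \<epsilon> / 4"
      by (rule det)
  qed
  also have "{\<omega> \<in> space M. \<epsilon> / 2 \<le> err \<omega> + \<epsilon> / 4} = {\<omega> \<in> space M. \<epsilon> / 4 \<le> err \<omega>}"
    by auto
  finally show ?thesis
    by (simp only: err_def)
qed

lemma (in harness) sigma2_nonneg: "0 \<le> \<sigma>2"
  using xi_second_moment[of 0 0] by (metis integral_nonneg_AE zero_le_power2 AE_I2)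

lemma (in harness) eventually_measure_deviation_le:
  fixes u0 :: "real ^ 'd \<Rightarrow> real" and x :: "real ^ 'd" and t :: real
  defines "R \<equiv> norm x + real CARD('d) + t * Mb"
  assumes u0: "continuous_on UNIV u0" and \<epsilon>: "0 < \<epsilon>" and t: "0 \<le> t"
  shows "\<forall>\<^sub>F n in sequentially.
    measure M {\<omega> \<in> space M.
      \<epsilon> \<le> \<bar>h n (nat \<lfloor>real n * t\<rfloor>) (floor_vec n x) \<omega> / real n - u0 (x + t *\<^sub>R step_mean p S)\<bar>}
    \<le> measure M {\<omega> \<in> space M.
      \<epsilon> / 4 \<le> (SUP z\<in>cball 0 R. \<bar>h n 0 (floor_vec n z) \<omega> / real n - u0 z\<bar>)}
      + 4 * t * \<sigma>2 / \<epsilon>\<^sup>2 / real n"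
    (is "\<forall>\<^sub>F n in sequentially. ?dev n \<le> ?init n + _")
proof -
  obtain C where approx: "\<And>n f s. n > 0 \<Longrightarrow>
      (\<And>z. z \<in> cball 0 R \<Longrightarrow> \<bar>f (floor_vec n z) / real n - u0 z\<bar> \<le> s) \<Longrightarrow>
      \<bar>(trans_op p S ^^ nat \<lfloor>real n * t\<rfloor>) f (floor_vec n x) / real n - u0 (x + t *\<^sub>R step_mean p S)\<bar>
        \<le> s + \<epsilon> / 8 + C / real n"
    using trans_iter_rescaled_approx[OF p_nonneg sum_p step_bound Mb_nonneg u0 t, of "\<epsilon> / 8" x]
      \<epsilon> unfolding R_def by auto
  have "?dev n \<le> ?init n + 4 * t * \<sigma>2 / \<epsilon>\<^sup>2 / real n"
    if n: "0 < n" and C_small: "C / real n < \<epsilon> / 8" for n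
  proof -
    have "?dev n \<le> ?init n + 4 * real (nat \<lfloor>real n * t\<rfloor>) * \<sigma>2 / (real n * \<epsilon>)\<^sup>2"
    proof (rule measure_deviation_le_initial_error[OF u0 n \<epsilon>])
      fix f s assume "\<And>z. z \<in> cball 0 R \<Longrightarrow> \<bar>f (floor_vec n z) / real n - u0 z\<bar> \<le> s"
      then have "\<bar>(trans_op p S ^^ nat \<lfloor>real n * t\<rfloor>) f (floor_vec n x) / real n
          - u0 (x + t *\<^sub>R step_mean p S)\<bar> \<le> s + \<epsilon> / 8 + C / real n"
        by (rule approx[OF n])
      then show "\<bar>(trans_op p S ^^ nat \<lfloor>real n * t\<rfloor>) f (floor_vec n x) / real n
          - u0 (x + t *\<^sub>R step_mean p S)\<bar> \<le> s + \<epsilon> / 4"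
        using C_small by linarith
    qed
    also have "4 * real (nat \<lfloor>real n * t\<rfloor>) * \<sigma>2 / (real n * \<epsilon>)\<^sup>2 \<le> 4 * (real n * t) * \<sigma>2 / (real n * \<epsilon>)\<^sup>2"
      using t sigma2_nonneg by (intro divide_right_mono mult_right_mono) auto
    also have "\<dots> = 4 * t * \<sigma>2 / \<epsilon>\<^sup>2 / real n"
      using n \<epsilon> by (simp add: power2_eq_square field_simps)
    finally show ?thesis by simp
  qed
  moreover have "\<forall>\<^sub>F n in sequentially. 0 < n \<and> C / real n < \<epsilon> / 8"
    using eventually_gt_at_top[of 0] order_tendstoD(2)[OF lim_const_over_n[of C], of "\<epsilon> / 8"] \<epsilon>
    by (auto intro: eventually_conj)
  ultimately show ?thesis
    by (auto elim: eventually_mono)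
qed

lemma (in harness) tendsto_deviation_probability:
  fixes u0 :: "real ^ 'd \<Rightarrow> real" and x :: "real ^ 'd"
  assumes u0: "continuous_on UNIV u0" and \<epsilon>: "0 < \<epsilon>" and t: "0 \<le> t"
    and init: "\<And>\<epsilon> R. \<epsilon> > 0 \<Longrightarrow>
        (\<lambda>n. measure M {\<omega> \<in> space M.
            (SUP x\<in>cball 0 R. \<bar>h n 0 (floor_vec n x) \<omega> / real n - u0 x\<bar>) \<ge> \<epsilon>}) \<longlonglongrightarrow> 0"
  shows "(\<lambda>n. measure M {\<omega> \<in> space M.
      \<bar>h n (nat \<lfloor>real n * t\<rfloor>) (floor_vec n x) \<omega> / real n - u0 (x + t *\<^sub>R step_mean p S)\<bar> \<ge> \<epsilon>})
    \<longlonglongrightarrow> 0"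
proof (rule tendsto_sandwich[OF _ eventually_measure_deviation_le[OF u0 \<epsilon> t] tendsto_const])
  show "(\<lambda>n. measure M {\<omega> \<in> space M. \<epsilon> / 4
      \<le> (SUP z\<in>cball 0 (norm x + real CARD('d) + t * Mb). \<bar>h n 0 (floor_vec n z) \<omega> / real n - u0 z\<bar>)}
      + 4 * t * \<sigma>2 / \<epsilon>\<^sup>2 / real n) \<longlonglongrightarrow> 0"
    using tendsto_add[OF init[of "\<epsilon> / 4" "norm x + real CARD('d) + t * Mb"]
        lim_const_over_n[of "4 * t * \<sigma>2 / \<epsilon>\<^sup>2"]] \<epsilon>
    by simp
qed simp

theorem theorem2p1:
  fixes p :: "int ^ 'd \<Rightarrow> real"
    and M :: "'w measure"
    and \<xi> :: "int \<Rightarrow> int ^ 'd \<Rightarrow> 'w \<Rightarrow> real"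
    and h :: "nat \<Rightarrow> nat \<Rightarrow> int ^ 'd \<Rightarrow> 'w \<Rightarrow> real"
    and u0 :: "real ^ 'd \<Rightarrow> real"
  assumes prob: "prob_space M"
    and p_range: "\<And>x. 0 \<le> p x \<and> p x < 1"
    and p_bdd: "\<exists>R::real. \<forall>x. norm (of_int_vec x) > R \<longrightarrow> p x = 0"
    and p_sum: "(p has_sum 1) UNIV"
    and p_aper: "\<And>u. add_subgroup_gen {u + x | x. p x > 0} = UNIV"
    and xi_indep: "prob_space.indep_vars M (\<lambda>_. borel) (\<lambda>(t, x). \<xi> t x) UNIV"
    and xi_ident: "\<And>t x. distr M borel (\<xi> t x) = distr M borel (\<xi> 0 0)"
    and xi_mean: "\<And>t x. integrable M (\<xi> t x) \<and> prob_space.expectation M (\<xi> t x) = 0"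
    and xi_var: "\<And>t x. integrable M (\<lambda>\<omega>. (\<xi> t x \<omega>)\<^sup>2)"
    and harness: "\<And>n t x \<omega>. \<omega> \<in> space M \<Longrightarrow>
        h n (Suc t) x \<omega> = (\<Sum>y\<in>{y. p (y - x) \<noteq> 0}. p (y - x) * h n t y \<omega>) + \<xi> (int t + 1) x \<omega>"
    and h0_indep: "\<And>n. prob_space.indep_set M
        (gen_sigma M (\<lambda>(s, x). \<xi> s x) {(s, x). s \<ge> 1}) (gen_sigma M (h n 0) UNIV)"
    and u0_cont: "continuous_on UNIV u0"
    and init: "\<And>\<epsilon> R. \<epsilon> > 0 \<Longrightarrow>
        (\<lambda>n. measure M {\<omega> \<in> space M.
            (SUP x\<in>cball 0 R. \<bar>h n 0 (floor_vec n x) \<omega> / real n - u0 x\<bar>) \<ge> \<epsilon>}) \<longlonglongrightarrow> 0"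
  shows "\<forall>\<epsilon>>0. \<forall>t\<ge>0. \<forall>x.
        (\<lambda>n. measure M {\<omega> \<in> space M.
            \<bar>h n (nat \<lfloor>real n * t\<rfloor>) (floor_vec n x) \<omega> / real n
              - u0 (x + t *\<^sub>R mean_drift p)\<bar> \<ge> \<epsilon>}) \<longlonglongrightarrow> 0"
proof -
  define S where "S = {w. p w \<noteq> 0}"
  obtain Mb where fin: "finite S" and s1: "sum p S = 1"
    and bd: "\<And>w. w \<in> S \<Longrightarrow> norm (of_int_vec w) \<le> Mb"
    by (rule bounded_support_kernelE[OF p_bdd p_sum, folded S_def]) blast
  have noise: "noise_setup M \<xi>"
    by (rule noise_setup.intro[OF prob xi_indep xi_mean xi_var])
  have xi_sq: "integral\<^sup>L M (\<lambda>\<omega>. (\<xi> t x \<omega>)\<^sup>2) = integral\<^sup>L M (\<lambda>\<omega>. (\<xi> 0 0 \<omega>)\<^sup>2)" for t x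
    using noise_setup.xi_measurable[OF noise] by (intro integral_square_eq_of_distr_eq[OF _ _ xi_ident])
  have h_Suc: "h n (Suc t) x \<omega> = trans_op p S (\<lambda>y. h n t y \<omega>) x + \<xi> (int t + 1) x \<omega>"
    if "\<omega> \<in> space M" for n t x \<omega>
    unfolding S_def sum_kernel_eq_trans_op[symmetric] by (rule harness[OF that])
  have h0_meas: "h n 0 y \<in> borel_measurable M" for n y
    by (rule measurable_of_indep_set_gen_sigma[OF prob h0_indep UNIV_I])
  have p_nonneg: "\<And>w. w \<in> S \<Longrightarrow> 0 \<le> p w"
    using p_range by blast
  interpret harness M \<xi> p S Mb "integral\<^sup>L M (\<lambda>\<omega>. (\<xi> 0 0 \<omega>)\<^sup>2)" h
    by (rule harness.intro[OF noise harness_axioms.intro[OF fin p_nonneg s1 bd xi_sq h_Suc h0_meas]])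
  have "mean_drift p = step_mean p S"
    by (simp add: step_mean_def mean_drift_def S_def)
  then show ?thesis
    using tendsto_deviation_probability[OF u0_cont _ _ init] by presburger
qed

end
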